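(* Let $S$ be a star-shaped subset of a topological real vector space $V$ and $p_S$ its gauge function. Then: (1a) $\mathrm{int}\big(p_S^{-1}([0,1))\big)=\mathrm{int}(S)=\mathrm{int}\big(p_S^{-1}([0,1])\big)$; (1b) $\overline{p_S^{-1}([0,1))}=\overline{S}=\overline{p_S^{-1}([0,1])}$; (2a) $p_S$ is lower semi-continuous $\iff$ $p_S^{-1}([0,1])$ is closed in $V$ $\iff$ $p_S^{-1}([0,1])=\overline{S}$; (2b) $p_S$ is upper semi-continuous $\iff$ $p_S^{-1}([0,1))$ is open in $V$ $\iff$ $p_S^{-1}([0,1))=\mathrm{int}(S)$; (2c) $p_S$ is continuous $\iff$ $p_S^{-1}(1)=\partial S$. Here interior, closure and boundary are taken in $V$, and semi-continuity/continuity refer to $p_S$ as a map into $[0,+\infty]$ with its usual order topology.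
   Context: Topological real vector spaces are not assumed Hausdorff. A subset $S$ is star-shaped (about the origin) if $tx\in S$ for all $x\in S$, $t\in[0,1]$. The gauge of $S$ is $p_S:V\to[0,+\infty]$, $p_S(x)=\inf\{\lambda\ge 0: x\in\lambda S\}$ (with $\inf\emptyset=+\infty$). *)

theory Defs
  imports "HOL-Analysis.Analysis" "HOL-Library.Extended_Nonnegative_Real"
begin

definition star_shaped0 :: "'a::real_vector set \<Rightarrow> bool" where
  "star_shaped0 S \<longleftrightarrow> (\<forall>x\<in>S. \<forall>t::real. 0 \<le> t \<and> t \<le> 1 \<longrightarrow> t *\<^sub>R x \<in> S)"

text \<open>Gauge (Minkowski functional) with values in [0,+infinity]; Inf of the empty set is top.\<close>
definition gauge_fun :: "'a::real_vector set \<Rightarrow> 'a \<Rightarrow> ennreal" where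
  "gauge_fun S x = Inf {ennreal t | t. 0 \<le> t \<and> x \<in> (\<lambda>y. t *\<^sub>R y) ` S}"

definition lower_semicont :: "('a::topological_space \<Rightarrow> ennreal) \<Rightarrow> bool" where
  "lower_semicont f \<longleftrightarrow> (\<forall>c. open {x. c < f x})"

definition upper_semicont :: "('a::topological_space \<Rightarrow> ennreal) \<Rightarrow> bool" where
  "upper_semicont f \<longleftrightarrow> (\<forall>c. open {x. f x < c})"

end

theory Submission
  imports Defs
begin

text \<open>The key fact is positive homogeneity, \<open>p\<^sub>S (c x) = c p\<^sub>S(x)\<close> for
  \<open>c > 0\<close>: every sublevel set \<open>{p\<^sub>S \<le> r}\<close> resp. \<open>{p\<^sub>S < r}\<close> with \<open>r > 0\<close> is a homeomorphic image
  of \<open>M = {p\<^sub>S \<le> 1}\<close> resp. \<open>L = {p\<^sub>S < 1}\<close>, and the sublevel sets at any level are intersections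
  resp. unions of these, so semicontinuity reduces to \<open>M\<close> being closed resp. \<open>L\<close> being open.
  Star-shapedness gives \<open>L \<subseteq> S \<subseteq> M\<close>. Conversely, a point \<open>x\<close> of \<open>M\<close> is the limit of
  \<open>t x \<in> L\<close> as \<open>t \<nearrow> 1\<close>, and if \<open>x\<close> is interior to \<open>M\<close> then so is some \<open>c x\<close> with \<open>c > 1\<close>,
  whence the neighbourhood \<open>{y. c y \<in> int M}\<close> of \<open>x\<close> lies in \<open>{p\<^sub>S \<le> 1/c} \<subseteq> L\<close>. Hence \<open>L\<close>, \<open>S\<close>, \<open>M\<close>
  share interior and closure, and \<open>p\<^sub>S\<^sup>-\<^sup>1(1) = M - L\<close> is the frontier of \<open>S\<close> exactly when
  \<open>M = cl S\<close> and \<open>L = int S\<close>.\<close>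

lemma ennreal_between:
  fixes a b :: ennreal
  assumes "a < b"
  obtains r where "0 < r" "a < ennreal r" "ennreal r < b"
proof -
  obtain q where q: "a < ennreal (real_of_rat q)" "ennreal (real_of_rat q) < b"
    using ennreal_rat_dense[OF assms] by blast
  then have "0 < real_of_rat q"
    using ennreal_less_zero_iff le_less_trans[OF zero_le] by blast
  with q show thesis by (intro that)
qed

lemma ennreal_cmult_Inf:
  assumes "0 < c"
  shows "ennreal c * Inf A = Inf ((*) (ennreal c) ` A)"
proof (rule mono_bij_Inf)
  have inverse: "ennreal (1/c) * (ennreal c * a) = a" "ennreal c * (ennreal (1/c) * a) = a" for a
    using assms by (simp_all add: mult.assoc[symmetric] flip: ennreal_mult)
  show "bij ((*) (ennreal c))"
    by (rule bij_betw_byWitness[where f' = "(*) (ennreal (1/c))"]) (use inverse in auto)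
qed (auto simp: mono_def mult_left_mono)

lemma ennreal_mult_less_mult_iff:
  "c \<noteq> 0 \<Longrightarrow> c \<noteq> top \<Longrightarrow> c * a < c * b \<longleftrightarrow> a < (b :: ennreal)"
  by (simp add: ennreal_mult_le_mult_iff flip: not_le)

lemma continuous_on_iff_lower_upper_semicont:
  "continuous_on UNIV f \<longleftrightarrow> lower_semicont f \<and> upper_semicont f"
proof
  assume "continuous_on UNIV f"
  then show "lower_semicont f \<and> upper_semicont f"
    unfolding lower_semicont_def upper_semicont_def
    using open_vimage[of "{_<..}" f] open_vimage[of "{..<_}" f] by (auto simp: vimage_def)
next
  assume "lower_semicont f \<and> upper_semicont f"
  then have "open {y. l < f y}" "open {y. f y < u}" for l u
    unfolding lower_semicont_def upper_semicont_def by blast+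
  then show "continuous_on UNIV f"
    unfolding continuous_on_def order_tendsto_iff eventually_at_topological by blast
qed

definition positively_homogeneous :: "('a::real_vector \<Rightarrow> ennreal) \<Rightarrow> bool" where
  "positively_homogeneous p \<longleftrightarrow> (\<forall>c > 0. \<forall>x. p (c *\<^sub>R x) = ennreal c * p x)"

lemma positively_homogeneousD:
  "positively_homogeneous p \<Longrightarrow> 0 < c \<Longrightarrow> p (c *\<^sub>R x) = ennreal c * p x"
  unfolding positively_homogeneous_def by blast

lemma vimage_scaleR_sublevel_le:
  assumes hom: "positively_homogeneous p" and "0 < c"
  shows "(\<lambda>y. c *\<^sub>R y) -` {x. p x \<le> 1} = {x. p x \<le> ennreal (1/c)}"
proof -
  have "ennreal c * a \<le> 1 \<longleftrightarrow> a \<le> ennreal (1/c)" for a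
    using ennreal_mult_le_mult_iff[of "ennreal c" a "ennreal (1/c)"] \<open>0 < c\<close>
    by (simp flip: ennreal_mult)
  then show ?thesis using positively_homogeneousD[OF hom \<open>0 < c\<close>] by auto
qed

lemma vimage_scaleR_sublevel_less:
  assumes hom: "positively_homogeneous p" and "0 < c"
  shows "(\<lambda>y. c *\<^sub>R y) -` {x. p x < 1} = {x. p x < ennreal (1/c)}"
proof -
  have "ennreal c * a < 1 \<longleftrightarrow> a < ennreal (1/c)" for a
    using ennreal_mult_less_mult_iff[of "ennreal c" a "ennreal (1/c)"] \<open>0 < c\<close>
    by (simp flip: ennreal_mult)
  then show ?thesis using positively_homogeneousD[OF hom \<open>0 < c\<close>] by auto
qed

lemma lower_semicont_iff_closed_sublevel:
  fixes p :: "'a::{real_vector,topological_space} \<Rightarrow> ennreal"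
  assumes hom: "positively_homogeneous p"
    and cont: "\<And>c. continuous_on UNIV (\<lambda>y::'a. c *\<^sub>R y)"
  shows "lower_semicont p \<longleftrightarrow> closed {x. p x \<le> 1}"
proof
  assume "lower_semicont p"
  then have "open (- {x. p x \<le> 1})"
    unfolding lower_semicont_def Compl_eq not_le mem_Collect_eq by blast
  then show "closed {x. p x \<le> 1}" by (simp add: closed_def)
next
  assume closed_M: "closed {x. p x \<le> 1}"
  have closed_sublevel: "closed {x. p x \<le> ennreal r}" if "0 < r" for r
    using closed_vimage[OF closed_M cont[of "1/r"]]
      vimage_scaleR_sublevel_le[OF hom, of "1/r"] that by simp
  have "{x. p x \<le> c} = (\<Inter>r\<in>{r. 0 < r \<and> c < ennreal r}. {x. p x \<le> ennreal r})" for c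
  proof (rule set_eqI, rule iffI)
    fix x assume "x \<in> (\<Inter>r\<in>{r. 0 < r \<and> c < ennreal r}. {x. p x \<le> ennreal r})"
    then show "x \<in> {x. p x \<le> c}"
      using ennreal_between[of c "p x"] by (force simp: not_le[symmetric])
  qed auto
  then have "closed {x. p x \<le> c}" for c
    using closed_sublevel by (metis (no_types, lifting) closed_INT mem_Collect_eq)
  moreover have "{x. c < p x} = - {x. p x \<le> c}" for c
    by auto
  ultimately show "lower_semicont p"
    unfolding lower_semicont_def by (simp add: open_Compl)
qed

lemma upper_semicont_iff_open_sublevel:
  fixes p :: "'a::{real_vector,topological_space} \<Rightarrow> ennreal"
  assumes hom: "positively_homogeneous p"
    and cont: "\<And>c. continuous_on UNIV (\<lambda>y::'a. c *\<^sub>R y)"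
  shows "upper_semicont p \<longleftrightarrow> open {x. p x < 1}"
proof
  assume open_L: "open {x. p x < 1}"
  have open_sublevel: "open {x. p x < ennreal r}" if "0 < r" for r
    using open_vimage[OF open_L cont[of "1/r"]]
      vimage_scaleR_sublevel_less[OF hom, of "1/r"] that by simp
  have "{x. p x < c} = (\<Union>r\<in>{r. 0 < r \<and> ennreal r < c}. {x. p x < ennreal r})" for c
  proof (rule set_eqI, rule iffI)
    fix x assume "x \<in> {x. p x < c}"
    then show "x \<in> (\<Union>r\<in>{r. 0 < r \<and> ennreal r < c}. {x. p x < ennreal r})"
      using ennreal_between[of "p x" c] by force
  qed auto
  then show "upper_semicont p"
    unfolding upper_semicont_def using open_sublevel by (metis (no_types, lifting) open_UN mem_Collect_eq)
qed (simp add: upper_semicont_def)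

lemma tendsto_scaleR_at_one:
  fixes x :: "'a::{real_vector,topological_space}"
  assumes "continuous_on UNIV (\<lambda>t::real. t *\<^sub>R x)"
  shows "((\<lambda>t. t *\<^sub>R x) \<longlongrightarrow> x) (at 1 within T)"
proof -
  have "((\<lambda>t. t *\<^sub>R x) \<longlongrightarrow> 1 *\<^sub>R x) (at 1)"
    using assms continuous_on_eq_continuous_at[OF open_UNIV] isCont_def by blast
  then have "((\<lambda>t. t *\<^sub>R x) \<longlongrightarrow> x) (at 1)"
    by simp
  then show ?thesis
    by (rule tendsto_within_subset) simp
qed

lemma interior_sublevel_le_subset:
  fixes p :: "'a::{real_vector,topological_space} \<Rightarrow> ennreal"
  assumes hom: "positively_homogeneous p"
    and cont_vector: "\<And>c. continuous_on UNIV (\<lambda>y::'a. c *\<^sub>R y)"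
    and cont_scalar: "\<And>x::'a. continuous_on UNIV (\<lambda>t::real. t *\<^sub>R x)"
  shows "interior {x. p x \<le> 1} \<subseteq> interior {x. p x < 1}"
proof
  fix x assume x: "x \<in> interior {x. p x \<le> 1}"
  have "((\<lambda>t. t *\<^sub>R x) \<longlongrightarrow> x) (at_right 1)"
    by (rule tendsto_scaleR_at_one[OF cont_scalar])
  then have "\<forall>\<^sub>F t in at_right 1. t *\<^sub>R x \<in> interior {x. p x \<le> 1}"
    using x by (rule topological_tendstoD[OF _ open_interior])
  moreover have "\<forall>\<^sub>F t in at_right 1. t \<in> {1<..<2::real}"
    by (rule eventually_at_right_real) simp
  ultimately have "\<forall>\<^sub>F t in at_right 1. t *\<^sub>R x \<in> interior {x. p x \<le> 1} \<and> t \<in> {1<..<2}"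
    by (rule eventually_conj)
  then obtain c where c: "1 < c" "c *\<^sub>R x \<in> interior {x. p x \<le> 1}"
    using eventually_happens'[OF trivial_limit_at_right_real] by fastforce
  define W where "W = (\<lambda>y. c *\<^sub>R y) -` interior {x. p x \<le> 1}"
  have "open W"
    unfolding W_def by (rule open_vimage[OF open_interior cont_vector])
  moreover have "x \<in> W"
    unfolding W_def using c(2) by simp
  moreover have "W \<subseteq> {x. p x < 1}"
  proof
    fix y assume "y \<in> W"
    then have "y \<in> (\<lambda>y. c *\<^sub>R y) -` {x. p x \<le> 1}"
      unfolding W_def using interior_subset by blast
    also have "\<dots> = {x. p x \<le> ennreal (1/c)}"
      using vimage_scaleR_sublevel_le[OF hom, of c] c(1) by simp
    finally have "p y \<le> ennreal (1/c)"
      by simp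
    also have "\<dots> < 1"
      using c(1) by (simp add: ennreal_less_iff flip: ennreal_1)
    finally show "y \<in> {x. p x < 1}" by simp
  qed
  ultimately show "x \<in> interior {x. p x < 1}"
    using interior_maximal by blast
qed

lemma sublevel_le_subset_closure_less:
  fixes p :: "'a::{real_vector,topological_space} \<Rightarrow> ennreal"
  assumes hom: "positively_homogeneous p"
    and cont_scalar: "\<And>x::'a. continuous_on UNIV (\<lambda>t::real. t *\<^sub>R x)"
  shows "{x. p x \<le> 1} \<subseteq> closure {x. p x < 1}"
proof
  fix x assume "x \<in> {x. p x \<le> 1}"
  then have "t *\<^sub>R x \<in> {x. p x < 1}" if "t \<in> {0<..<1}" for t
    using that positively_homogeneousD[OF hom, of t x] mult_left_mono[of "p x" 1 "ennreal t"]
    by (auto simp: ennreal_less_iff intro: le_less_trans)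
  moreover have "\<forall>\<^sub>F t in at_left 1. t \<in> {0<..<1::real}"
    by (rule eventually_at_left_real) simp
  ultimately have "\<forall>\<^sub>F t in at_left 1. t *\<^sub>R x \<in> closure {x. p x < 1}"
    using closure_subset by (blast intro: eventually_mono)
  moreover have "((\<lambda>t. t *\<^sub>R x) \<longlongrightarrow> x) (at_left 1)"
    by (rule tendsto_scaleR_at_one[OF cont_scalar])
  ultimately show "x \<in> closure {x. p x < 1}"
    by (intro Lim_in_closed_set[of _ _ "at_left 1"]) auto
qed

lemma continuous_on_scaleR_partial:
  assumes "continuous_on UNIV (\<lambda>p::real \<times> 'a::{real_vector,topological_space}. fst p *\<^sub>R snd p)"
  shows "continuous_on UNIV (\<lambda>y::'a. c *\<^sub>R y)" "continuous_on UNIV (\<lambda>t::real. t *\<^sub>R (x::'a))"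
proof -
  have pair: "continuous_on UNIV (\<lambda>y::'a. (c, y))" "continuous_on UNIV (\<lambda>t::real. (t, x))"
    by (intro continuous_intros)+
  show "continuous_on UNIV (\<lambda>y::'a. c *\<^sub>R y)"
    using continuous_on_compose[OF pair(1) continuous_on_subset[OF assms subset_UNIV]]
    by (simp add: o_def)
  show "continuous_on UNIV (\<lambda>t::real. t *\<^sub>R x)"
    using continuous_on_compose[OF pair(2) continuous_on_subset[OF assms subset_UNIV]]
    by (simp add: o_def)
qed

lemma positively_homogeneous_gauge_fun: "positively_homogeneous (gauge_fun S)"
  unfolding positively_homogeneous_def
proof (intro allI impI)
  fix c :: real and x assume "0 < c"
  have "{ennreal t | t. 0 \<le> t \<and> c *\<^sub>R x \<in> (\<lambda>y. t *\<^sub>R y) ` S}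
      = (*) (ennreal c) ` {ennreal t | t. 0 \<le> t \<and> x \<in> (\<lambda>y. t *\<^sub>R y) ` S}"
  proof (rule set_eqI, rule iffI)
    fix a assume "a \<in> {ennreal t | t. 0 \<le> t \<and> c *\<^sub>R x \<in> (\<lambda>y. t *\<^sub>R y) ` S}"
    then obtain t y where t: "a = ennreal t" "0 \<le> t" "y \<in> S" and eq: "c *\<^sub>R x = t *\<^sub>R y"
      by auto
    have "x = (1 / c) *\<^sub>R (c *\<^sub>R x)"
      using \<open>0 < c\<close> by simp
    then have "x = (t / c) *\<^sub>R y"
      unfolding eq by simp
    with t show "a \<in> (*) (ennreal c) ` {ennreal t | t. 0 \<le> t \<and> x \<in> (\<lambda>y. t *\<^sub>R y) ` S}"
      using \<open>0 < c\<close> by (auto simp flip: ennreal_mult intro!: image_eqI[where x = "ennreal (t / c)"])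
  next
    fix a assume "a \<in> (*) (ennreal c) ` {ennreal t | t. 0 \<le> t \<and> x \<in> (\<lambda>y. t *\<^sub>R y) ` S}"
    then obtain t y where "a = ennreal (c * t)" "0 \<le> t" "y \<in> S" "x = t *\<^sub>R y"
      using \<open>0 < c\<close> by (auto simp flip: ennreal_mult)
    then show "a \<in> {ennreal t | t. 0 \<le> t \<and> c *\<^sub>R x \<in> (\<lambda>y. t *\<^sub>R y) ` S}"
      using \<open>0 < c\<close> by (auto intro!: exI[where x = "c * t"])
  qed
  then show "gauge_fun S (c *\<^sub>R x) = ennreal c * gauge_fun S x"
    unfolding gauge_fun_def using ennreal_cmult_Inf[OF \<open>0 < c\<close>] by simp
qed

lemma gauge_fun_le_one_if_mem: "x \<in> S \<Longrightarrow> gauge_fun S x \<le> 1"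
  unfolding gauge_fun_def by (rule Inf_lower) (auto intro!: exI[where x = 1])

lemma gauge_fun_less_one_imp_mem:
  assumes "star_shaped0 S" "gauge_fun S x < 1"
  shows "x \<in> S"
proof -
  obtain t y where "0 \<le> t" "y \<in> S" "x = t *\<^sub>R y" "ennreal t < 1"
    using assms(2) unfolding gauge_fun_def Inf_less_iff by auto
  then show ?thesis
    using assms(1) unfolding star_shaped0_def by (auto simp: ennreal_less_iff simp flip: ennreal_1)
qed

lemma diff_eq_frontier_iff:
  assumes "L \<subseteq> S" "S \<subseteq> M" "interior S \<subseteq> L"
  shows "M - L = frontier S \<longleftrightarrow> M = closure S \<and> L = interior S"
proof
  assume frontier: "M - L = frontier S"
  have "L \<subseteq> interior S"
    using assms(1,2) closure_subset frontier unfolding frontier_def by blast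
  then have "L = interior S"
    using assms(3) by blast
  with frontier show "M = closure S \<and> L = interior S"
    using assms(1,2) interior_subset closure_subset unfolding frontier_def by blast
qed (simp add: frontier_def)

theorem mainTheorem14:
  fixes S :: "'a::{real_vector, topological_space} set"
  assumes add_cont: "continuous_on UNIV (\<lambda>p::'a \<times> 'a. fst p + snd p)"
    and scale_cont: "continuous_on UNIV (\<lambda>p::real \<times> 'a. fst p *\<^sub>R snd p)"
    and star: "star_shaped0 S"
  shows "(interior {x. gauge_fun S x < 1} = interior S
       \<and> interior S = interior {x. gauge_fun S x \<le> 1})
    \<and> (closure {x. gauge_fun S x < 1} = closure S
       \<and> closure S = closure {x. gauge_fun S x \<le> 1})
    \<and> ((lower_semicont (gauge_fun S) \<longleftrightarrow> closed {x. gauge_fun S x \<le> 1})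
       \<and> (closed {x. gauge_fun S x \<le> 1} \<longleftrightarrow> {x. gauge_fun S x \<le> 1} = closure S))
    \<and> ((upper_semicont (gauge_fun S) \<longleftrightarrow> open {x. gauge_fun S x < 1})
       \<and> (open {x. gauge_fun S x < 1} \<longleftrightarrow> {x. gauge_fun S x < 1} = interior S))
    \<and> (continuous_on UNIV (gauge_fun S) \<longleftrightarrow> {x. gauge_fun S x = 1} = frontier S)"
proof -
  define L where "L = {x. gauge_fun S x < 1}"
  define M where "M = {x. gauge_fun S x \<le> 1}"
  note hom = positively_homogeneous_gauge_fun[of S]
  note cont = continuous_on_scaleR_partial[OF scale_cont]
  have LS: "L \<subseteq> S" and SM: "S \<subseteq> M"
    unfolding L_def M_def using gauge_fun_less_one_imp_mem[OF star] gauge_fun_le_one_if_mem by auto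
  have interior: "interior L = interior S" "interior S = interior M"
    using interior_sublevel_le_subset[OF hom cont] interior_mono[OF LS] interior_mono[OF SM]
    unfolding L_def M_def by auto
  have closure: "closure L = closure S" "closure S = closure M"
    using closure_minimal[OF sublevel_le_subset_closure_less[OF hom cont(2)] closed_closure]
      closure_mono[OF LS] closure_mono[OF SM]
    unfolding L_def M_def by auto
  have lsc: "lower_semicont (gauge_fun S) \<longleftrightarrow> closed M"
    unfolding M_def by (rule lower_semicont_iff_closed_sublevel[OF hom cont(1)])
  have closed_M: "closed M \<longleftrightarrow> M = closure S"
    using closure(2) closure_closed[of M] closed_closure[of S] by metis
  have usc: "upper_semicont (gauge_fun S) \<longleftrightarrow> open L"
    unfolding L_def by (rule upper_semicont_iff_open_sublevel[OF hom cont(1)])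
  have open_L: "open L \<longleftrightarrow> L = interior S"
    using interior(1) interior_open[of L] open_interior[of S] by metis
  have "{x. gauge_fun S x = 1} = M - L"
    unfolding L_def M_def by auto
  then have "continuous_on UNIV (gauge_fun S) \<longleftrightarrow> {x. gauge_fun S x = 1} = frontier S"
    using continuous_on_iff_lower_upper_semicont[of "gauge_fun S"] lsc closed_M usc open_L
      diff_eq_frontier_iff[OF LS SM] interior(1) interior_subset[of L] by auto
  with interior closure lsc closed_M usc open_L show ?thesis
    unfolding L_def M_def by (intro conjI)
qed

end
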